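(* For the iterates of SONATA with step-size $\alpha\in(0,1]$ under Assumptions (A), (B), (C), (W), for all $\nu\ge0$: $$\|d^\nu\|^2\le\frac6\mu\Big(\Big(\frac{D_{\max}}{\tilde\mu_{\min}}+1\Big)^2+\frac{4L_{\max}^2}{\tilde\mu_{\min}^2}\Big)p^\nu+\frac3{\tilde\mu_{\min}^2}\|y_\perp^\nu\|^2.$$
   Context: Problem (P): minimize $U=F+G$ over $\mathcal K$, $F=\frac1m\sum_{i=1}^mf_i$. (A): $\mathcal K\subseteq\mathbb R^d$ nonempty closed convex; $f_i$ twice differentiable convex on open $\mathcal O\supseteq\mathcal K$; $\mu I\preceq\nabla^2F\preceq LI$ on $\mathcal K$ ($\mu>0$, $L<\infty$); $G$ convex on $\mathcal K$; $x^\star$ unique minimizer, $U^\star=U(x^\star)$. $\nabla^2f_i\preceq L_iI$ on $\mathcal K$, $L_{\max}=\max_iL_i$. (B): connected undirected graph on $\{1,\dots,m\}$, edges $\mathcal E$. (W): $w_{ii}>0$; for $i\ne j$, $w_{ij}>0$ iff $(i,j)\in\mathcal E$, else 0; $W$ doubly stochastic. (C): $\tilde f_i:\mathcal O\times\mathcal O\to\mathbb R$ $C^2$, $\nabla\tilde f_i(x;x)=\nabla f_i(x)$, $\nabla\tilde f_i(\cdot;x)$ $\tilde L_i$-Lipschitz and $\tilde f_i(\cdot;x)$ $\tilde\mu_i$-strongly convex on $\mathcal K$ for all $x\in\mathcal K$; constants $D_i^\ell\le D_i^u$ with $D_i^\ell I\preceq\nabla^2\tilde f_i(x;y)-\nabla^2F(x)\preceq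 D_i^uI$ on $\mathcal K\times\mathcal K$; $D_i=\max\{|D_i^\ell|,|D_i^u|\}$, $D_{\max}=\max D_i$, $\tilde\mu_{\min}=\min\tilde\mu_i$. SONATA: $x_i^0\in\mathcal K$, $y_i^0=\nabla f_i(x_i^0)$; $\hat x_i^\nu=\arg\min_{x_i\in\mathcal K}\tilde f_i(x_i;x_i^\nu)+(y_i^\nu-\nabla f_i(x_i^\nu))^\top(x_i-x_i^\nu)+G(x_i)$; $d_i^\nu=\hat x_i^\nu-x_i^\nu$; $x_i^{\nu+1/2}=x_i^\nu+\alpha d_i^\nu$; $x_i^{\nu+1}=\sum_jw_{ij}x_j^{\nu+1/2}$; $y_i^{\nu+1}=\sum_jw_{ij}(y_j^\nu+\nabla f_j(x_j^{\nu+1})-\nabla f_j(x_j^\nu))$. $d^\nu,y^\nu$ stack local vectors; $y_\perp^\nu=y^\nu-\mathbf1_m\otimes\frac1m\sum_iy_i^\nu$; $p^\nu=\sum_i(U(x_i^\nu)-U^\star)$. *)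

theory Defs
  imports "HOL-Analysis.Analysis"
begin

definition strongly_convex_with :: "'a::real_inner set \<Rightarrow> real \<Rightarrow> ('a \<Rightarrow> real) \<Rightarrow> bool" where
  "strongly_convex_with S c g \<longleftrightarrow> convex S \<and> convex_on S (\<lambda>x. g x - (c / 2) * (norm x)\<^sup>2)"

definition C2_on :: "'b::euclidean_space set \<Rightarrow> ('b \<Rightarrow> real) \<Rightarrow> bool" where
  "C2_on S g \<longleftrightarrow> (\<exists>(g' :: 'b \<Rightarrow> 'b \<Rightarrow>\<^sub>L real) (g'' :: 'b \<Rightarrow> 'b \<Rightarrow>\<^sub>L ('b \<Rightarrow>\<^sub>L real)).
      (\<forall>x\<in>S. (g has_derivative blinfun_apply (g' x)) (at x)) \<and>
      (\<forall>x\<in>S. (g' has_derivative blinfun_apply (g'' x)) (at x)) \<and>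
      continuous_on S g'')"

definition connected_graph :: "nat \<Rightarrow> (nat \<times> nat) set \<Rightarrow> bool" where
  "connected_graph m E \<longleftrightarrow> (\<forall>i<m. \<forall>j<m. (i, j) \<in> E\<^sup>*)"

end

(* Both the best response x_hat_i of agent i and the minimizer x* minimize a smooth function plus G
   over K. Adding their variational inequalities and using the strong monotonicity of
   grad f_tilde_i(.; x_i) gives
     mu_tilde_min |x_hat_i - x*| <= D_max |x_i - x*| + |y_i - grad F(x_i)|,
   since grad f_tilde_i(.; x_i) - grad F is D_max-Lipschitz on K: its derivative is symmetric and its
   quadratic form lies between D_i^l and D_i^u. Gradient tracking keeps the average of the y_i equal to
   the average of the grad f_j(x_j), so |y_i - grad F(x_i)| is at most the consensus error
   |y_i - y_bar| plus L_max times distances to x*. Strong convexity of F gives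
   U(x_i) - U* >= mu/2 |x_i - x*|^2, and squaring and summing with
   (a + b + c)^2 <= 3 (a^2 + b^2 + c^2) yields the bound. *)

theory Submission
  imports Defs
begin

section \<open>One-dimensional reduction and first-order optimality\<close>

lemma has_real_derivative_along_line:
  fixes s :: "'a::real_normed_vector \<Rightarrow> real"
  assumes "(s has_derivative s') (at (a + t *\<^sub>R h))"
  shows "((\<lambda>t. s (a + t *\<^sub>R h)) has_real_derivative s' h) (at t)"
proof -
  have "((\<lambda>t. a + t *\<^sub>R h) has_derivative (\<lambda>u. u *\<^sub>R h)) (at t)"
    by (auto intro!: derivative_eq_intros)
  from has_derivative_compose[OF this assms]
  have "((\<lambda>t. s (a + t *\<^sub>R h)) has_derivative (\<lambda>u. s' (u *\<^sub>R h))) (at t)" .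
  moreover have "(\<lambda>u. s' (u *\<^sub>R h)) = (*) (s' h)"
    using assms has_derivative_linear by (force simp: linear_scale)
  ultimately show ?thesis by (simp add: has_field_derivative_def)
qed

lemma DERIV_nonneg_at_right_minimum:
  fixes \<phi> :: "real \<Rightarrow> real"
  assumes "(\<phi> has_real_derivative c) (at 0)" "\<delta> > 0"
    and "\<And>t. 0 < t \<Longrightarrow> t < \<delta> \<Longrightarrow> \<phi> 0 \<le> \<phi> t"
  shows "0 \<le> c"
proof (rule ccontr)
  assume "\<not> 0 \<le> c"
  then obtain e where "e > 0" "\<forall>h>0. h < e \<longrightarrow> \<phi> (0 + h) < \<phi> 0"
    using DERIV_neg_dec_right[OF assms(1)] by force
  then have "\<phi> (min e \<delta> / 2) < \<phi> 0" using assms(2) by simp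
  moreover have "\<phi> 0 \<le> \<phi> (min e \<delta> / 2)" using assms(2,3) \<open>e > 0\<close> by simp
  ultimately show False by simp
qed

lemma gradient_inner_nonneg_of_segment_bound:
  fixes s :: "'a::real_inner \<Rightarrow> real"
  assumes "(s has_derivative (\<lambda>h. g \<bullet> h)) (at a)"
    and "\<And>t. 0 < t \<Longrightarrow> t < 1 \<Longrightarrow> s a \<le> s (a + t *\<^sub>R v) + t * c"
  shows "0 \<le> g \<bullet> v + c"
proof -
  have "((\<lambda>t. s (a + t *\<^sub>R v)) has_real_derivative g \<bullet> v) (at 0)"
    using has_real_derivative_along_line[of s _ a 0 v] assms(1) by simp
  then have "((\<lambda>t. s (a + t *\<^sub>R v) + t * c) has_real_derivative g \<bullet> v + c) (at 0)"
    by (auto intro!: derivative_eq_intros)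
  from DERIV_nonneg_at_right_minimum[OF this zero_less_one] show ?thesis
    using assms(2) by simp
qed

lemma convex_segment_mem:
  assumes "convex K" "a \<in> K" "z \<in> K" "0 \<le> t" "t \<le> 1"
  shows "a + t *\<^sub>R (z - a) \<in> K"
proof -
  have "a + t *\<^sub>R (z - a) = (1 - t) *\<^sub>R a + t *\<^sub>R z" by (simp add: algebra_simps)
  then show ?thesis using convexD[OF assms(1-3), of "1 - t" t] assms(4,5) by simp
qed

lemma convex_on_segment_le:
  assumes "convex_on K g" "a \<in> K" "z \<in> K" "0 \<le> t" "t \<le> 1"
  shows "g (a + t *\<^sub>R (z - a)) \<le> g a + t * (g z - g a)"
proof -
  have "a + t *\<^sub>R (z - a) = (1 - t) *\<^sub>R a + t *\<^sub>R z" by (simp add: algebra_simps)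
  then show ?thesis using convex_onD[OF assms(1), of t a z] assms(2-5) by (simp add: algebra_simps)
qed

lemma convex_on_gradient_inequality:
  fixes g :: "'a::real_inner \<Rightarrow> real"
  assumes "convex_on K g" "a \<in> K" "z \<in> K"
    and "(g has_derivative (\<lambda>h. dg \<bullet> h)) (at a)"
  shows "g a + dg \<bullet> (z - a) \<le> g z"
proof -
  have "((\<lambda>x. - g x) has_derivative (\<lambda>h. (- dg) \<bullet> h)) (at a)"
    using has_derivative_minus[OF assms(4)] by simp
  then have "0 \<le> (- dg) \<bullet> (z - a) + (g z - g a)"
  proof (rule gradient_inner_nonneg_of_segment_bound)
    fix t :: real assume "0 < t" "t < 1"
    then show "- g a \<le> - g (a + t *\<^sub>R (z - a)) + t * (g z - g a)"
      using convex_on_segment_le[OF assms(1-3), of t] by simp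
  qed
  then show ?thesis by simp
qed

lemma minimizer_variational_inequality:
  fixes s G :: "'a::real_inner \<Rightarrow> real"
  assumes "convex_on K G" "a \<in> K" "z \<in> K"
    and "(s has_derivative (\<lambda>h. ds \<bullet> h)) (at a)"
    and "\<And>w. w \<in> K \<Longrightarrow> s a + G a \<le> s w + G w"
  shows "0 \<le> ds \<bullet> (z - a) + G z - G a"
proof -
  have "0 \<le> ds \<bullet> (z - a) + (G z - G a)"
  proof (rule gradient_inner_nonneg_of_segment_bound[OF assms(4)])
    fix t :: real assume "0 < t" "t < 1"
    then show "s a \<le> s (a + t *\<^sub>R (z - a)) + t * (G z - G a)"
      using convex_on_segment_le[OF assms(1-3), of t]
        convex_segment_mem[OF convex_on_imp_convex[OF assms(1)] assms(2,3), of t] assms(5) by force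
  qed
  then show ?thesis by simp
qed

lemma gradient_inner_nonpos_of_minimizers:
  fixes s1 s2 G :: "'a::real_inner \<Rightarrow> real"
  assumes G: "convex_on K G" and "a \<in> K" "b \<in> K"
    and "(s1 has_derivative (\<lambda>h. ds1 \<bullet> h)) (at a)" "\<And>w. w \<in> K \<Longrightarrow> s1 a + G a \<le> s1 w + G w"
    and "(s2 has_derivative (\<lambda>h. ds2 \<bullet> h)) (at b)" "\<And>w. w \<in> K \<Longrightarrow> s2 b + G b \<le> s2 w + G w"
  shows "(ds1 - ds2) \<bullet> (a - b) \<le> 0"
  using minimizer_variational_inequality[OF G assms(2,3,4,5)]
    minimizer_variational_inequality[OF G assms(3,2,6,7)]
  by (simp add: inner_diff_left inner_diff_right inner_commute)

lemma convex_on_gradient_monotone: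
  fixes g :: "'a::real_inner \<Rightarrow> real"
  assumes "convex_on K g" "a \<in> K" "b \<in> K"
    and "(g has_derivative (\<lambda>h. dga \<bullet> h)) (at a)" "(g has_derivative (\<lambda>h. dgb \<bullet> h)) (at b)"
  shows "0 \<le> (dga - dgb) \<bullet> (a - b)"
  using convex_on_gradient_inequality[OF assms(1-3,4)] convex_on_gradient_inequality[OF assms(1,3,2,5)]
  by (simp add: inner_diff_left inner_diff_right inner_commute)

lemma strongly_convex_gradient_strongly_monotone:
  fixes g :: "'a::real_inner \<Rightarrow> real"
  assumes "strongly_convex_with K c g" "a \<in> K" "b \<in> K"
    and "(g has_derivative (\<lambda>h. dga \<bullet> h)) (at a)" "(g has_derivative (\<lambda>h. dgb \<bullet> h)) (at b)"
  shows "c * (norm (a - b))\<^sup>2 \<le> (dga - dgb) \<bullet> (a - b)"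
proof -
  have grad: "((\<lambda>x. g x - c / 2 * (norm x)\<^sup>2) has_derivative (\<lambda>h. (dg - c *\<^sub>R u) \<bullet> h)) (at u)"
    if "(g has_derivative (\<lambda>h. dg \<bullet> h)) (at u)" for dg u
  proof -
    have "((\<lambda>x. g x - c / 2 * (x \<bullet> x)) has_derivative (\<lambda>h. dg \<bullet> h - c / 2 * (h \<bullet> u + u \<bullet> h))) (at u)"
      using that by (auto intro!: derivative_eq_intros)
    then show ?thesis
      by (simp add: power2_norm_eq_inner inner_commute algebra_simps)
  qed
  have "convex_on K (\<lambda>x. g x - c / 2 * (norm x)\<^sup>2)"
    using assms(1) by (simp add: strongly_convex_with_def)
  from convex_on_gradient_monotone[OF this assms(2,3) grad[OF assms(4)] grad[OF assms(5)]]
  show ?thesis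
    by (simp add: power2_norm_eq_inner inner_commute algebra_simps)
qed

lemma convex_on_hessian_nonneg:
  fixes f :: "'a::real_inner \<Rightarrow> real"
  assumes "open S" "convex_on S f" "z \<in> S"
    and grad: "\<And>w. w \<in> S \<Longrightarrow> (f has_derivative (\<lambda>h. g w \<bullet> h)) (at w)"
    and hess: "(g has_derivative H) (at z)"
  shows "0 \<le> H h \<bullet> h"
proof -
  obtain r where r: "r > 0" "ball z r \<subseteq> S" using assms(1,3) open_contains_ball by blast
  have "((\<lambda>t. g (z + t *\<^sub>R h) \<bullet> h) has_real_derivative H h \<bullet> h) (at 0)"
    using has_real_derivative_along_line[of "\<lambda>u. g u \<bullet> h" "\<lambda>v. H v \<bullet> h" z 0 h]
      has_derivative_inner_left[OF hess, of h] by simp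
  moreover have "r / (norm h + 1) > 0" using r by (simp add: add_nonneg_pos)
  moreover have "g z \<bullet> h \<le> g (z + t *\<^sub>R h) \<bullet> h" if t: "0 < t" "t < r / (norm h + 1)" for t
  proof -
    have "t * norm h \<le> t * (norm h + 1)" using t by simp
    also have "\<dots> < r" using t(2) by (simp add: pos_less_divide_eq add_nonneg_pos)
    finally have "dist z (z + t *\<^sub>R h) < r" using t by (simp add: dist_norm)
    then have "z + t *\<^sub>R h \<in> S" using r(2) by auto
    from convex_on_gradient_monotone[OF assms(2) this assms(3) grad grad[OF assms(3)]] this
    have "0 \<le> t * ((g (z + t *\<^sub>R h) - g z) \<bullet> h)" by simp
    then show ?thesis using t by (simp add: zero_le_mult_iff inner_diff_left)
  qed
  ultimately show ?thesis
    using DERIV_nonneg_at_right_minimum[of "\<lambda>t. g (z + t *\<^sub>R h) \<bullet> h"] by simp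
qed

section \<open>Symmetry of the Hessian\<close>

lemma second_difference_mean_value:
  fixes f :: "'a::real_inner \<Rightarrow> real"
  assumes grad: "\<And>w. w \<in> S \<Longrightarrow> (f has_derivative (\<lambda>u. g w \<bullet> u)) (at w)"
    and "0 < s"
    and inS: "\<And>t. 0 \<le> t \<Longrightarrow> t \<le> s \<Longrightarrow> z + s *\<^sub>R h + t *\<^sub>R k \<in> S \<and> z + t *\<^sub>R k \<in> S"
  obtains \<tau> where "0 < \<tau>" "\<tau> < s"
    "f (z + s *\<^sub>R h + s *\<^sub>R k) - f (z + s *\<^sub>R h) - f (z + s *\<^sub>R k) + f z
       = s * ((g (z + s *\<^sub>R h + \<tau> *\<^sub>R k) - g (z + \<tau> *\<^sub>R k)) \<bullet> k)"
proof -
  define q where "q t = f (z + s *\<^sub>R h + t *\<^sub>R k) - f (z + t *\<^sub>R k)" for t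
  have "(q has_real_derivative (g (z + s *\<^sub>R h + t *\<^sub>R k) - g (z + t *\<^sub>R k)) \<bullet> k) (at t)"
    if "0 \<le> t" "t \<le> s" for t
    unfolding q_def inner_diff_left
    by (intro DERIV_diff has_real_derivative_along_line grad) (use inS[OF that] in auto)
  from MVT2[OF \<open>0 < s\<close> this] obtain \<tau> where "0 < \<tau>" "\<tau> < s"
    "q s - q 0 = (s - 0) * ((g (z + s *\<^sub>R h + \<tau> *\<^sub>R k) - g (z + \<tau> *\<^sub>R k)) \<bullet> k)"
    by blast
  then show ?thesis by (intro that) (auto simp: q_def)
qed

lemma second_difference_estimate:
  fixes f :: "'a::real_inner \<Rightarrow> real"
  assumes grad: "\<And>w. w \<in> S \<Longrightarrow> (f has_derivative (\<lambda>u. g w \<bullet> u)) (at w)"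
    and lin: "linear H" and s: "0 < s" and C: "norm h + norm k \<le> C"
    and in_S: "\<And>v. norm v \<le> s * C \<Longrightarrow> z + v \<in> S"
    and remainder: "\<And>v. norm v \<le> s * C \<Longrightarrow> norm (g (z + v) - g z - H v) \<le> \<eta>"
  shows "\<bar>f (z + s *\<^sub>R h + s *\<^sub>R k) - f (z + s *\<^sub>R h) - f (z + s *\<^sub>R k) + f z - s\<^sup>2 * (H h \<bullet> k)\<bar>
    \<le> 2 * \<eta> * C * s"
proof -
  have "norm k \<le> C" using C norm_ge_zero[of h] by linarith
  have near: "norm (s *\<^sub>R h + t *\<^sub>R k) \<le> s * C" "norm (t *\<^sub>R k) \<le> s * C"
    if "0 \<le> t" "t \<le> s" for t
  proof -
    have "norm (s *\<^sub>R h + t *\<^sub>R k) \<le> s * norm h + t * norm k"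
      using norm_triangle_ineq[of "s *\<^sub>R h" "t *\<^sub>R k"] that s by simp
    also have "\<dots> \<le> s * (norm h + norm k)"
      using mult_right_mono[OF that(2), of "norm k"] by (simp add: distrib_left)
    also have "\<dots> \<le> s * C" using mult_left_mono[OF C] s by simp
    finally show "norm (s *\<^sub>R h + t *\<^sub>R k) \<le> s * C" .
    show "norm (t *\<^sub>R k) \<le> s * C" using that \<open>norm k \<le> C\<close> by (simp add: mult_mono)
  qed
  obtain \<tau> where \<tau>: "0 < \<tau>" "\<tau> < s"
    "f (z + s *\<^sub>R h + s *\<^sub>R k) - f (z + s *\<^sub>R h) - f (z + s *\<^sub>R k) + f z
       = s * ((g (z + s *\<^sub>R h + \<tau> *\<^sub>R k) - g (z + \<tau> *\<^sub>R k)) \<bullet> k)"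
  proof (rule second_difference_mean_value[OF grad s])
    fix t :: real assume "0 \<le> t" "t \<le> s"
    then show "z + s *\<^sub>R h + t *\<^sub>R k \<in> S \<and> z + t *\<^sub>R k \<in> S"
      using in_S[OF near(1)] in_S[OF near(2)] by (simp add: add.assoc)
  qed
  define r1 where "r1 = g (z + (s *\<^sub>R h + \<tau> *\<^sub>R k)) - g z - H (s *\<^sub>R h + \<tau> *\<^sub>R k)"
  define r2 where "r2 = g (z + \<tau> *\<^sub>R k) - g z - H (\<tau> *\<^sub>R k)"
  have "(g (z + s *\<^sub>R h + \<tau> *\<^sub>R k) - g (z + \<tau> *\<^sub>R k)) \<bullet> k = s * (H h \<bullet> k) + (r1 - r2) \<bullet> k"
    unfolding r1_def r2_def
    by (simp add: add.assoc linear_add[OF lin] linear_scale[OF lin] inner_diff_left inner_add_left)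
  then have "\<bar>f (z + s *\<^sub>R h + s *\<^sub>R k) - f (z + s *\<^sub>R h) - f (z + s *\<^sub>R k) + f z - s\<^sup>2 * (H h \<bullet> k)\<bar>
      = s * \<bar>(r1 - r2) \<bullet> k\<bar>"
    using \<tau>(3) s by (simp add: power2_eq_square distrib_left abs_mult)
  also have "\<dots> \<le> s * (2 * \<eta> * C)"
  proof (rule mult_left_mono)
    have "norm r1 \<le> \<eta>" "norm r2 \<le> \<eta>"
      using remainder[OF near(1)] remainder[OF near(2)] \<tau>(1,2) unfolding r1_def r2_def by auto
    moreover have "0 \<le> C" using C by (smt (verit) norm_ge_zero)
    moreover have "\<bar>(r1 - r2) \<bullet> k\<bar> \<le> norm (r1 - r2) * norm k" by (rule Cauchy_Schwarz_ineq2)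
    moreover have "norm (r1 - r2) \<le> norm r1 + norm r2" by (rule norm_triangle_ineq4)
    ultimately show "\<bar>(r1 - r2) \<bullet> k\<bar> \<le> 2 * \<eta> * C"
      using \<open>norm k \<le> C\<close> by (smt (verit) mult_mono norm_ge_zero)
  qed (use s in simp)
  finally show ?thesis by (simp add: algebra_simps)
qed

lemma second_difference_asymptotics:
  fixes f :: "'a::real_inner \<Rightarrow> real"
  assumes "open S" "z \<in> S"
    and grad: "\<And>w. w \<in> S \<Longrightarrow> (f has_derivative (\<lambda>u. g w \<bullet> u)) (at w)"
    and hess: "(g has_derivative H) (at z)"
    and "e > 0"
  shows "\<exists>\<delta>>0. \<forall>s. 0 < s \<and> s < \<delta> \<longrightarrow>
    \<bar>f (z + s *\<^sub>R h + s *\<^sub>R k) - f (z + s *\<^sub>R h) - f (z + s *\<^sub>R k) + f z - s\<^sup>2 * (H h \<bullet> k)\<bar> \<le> e * s\<^sup>2"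
proof -
  define C where "C = norm h + norm k + 1"
  have C: "C > 0" "norm h + norm k \<le> C" unfolding C_def by (auto simp: add_nonneg_pos)
  define e' where "e' = e / (2 * C\<^sup>2)"
  have "e' > 0" using \<open>e > 0\<close> C by (simp add: e'_def)
  then obtain d1 where d1: "d1 > 0"
    "\<And>y. norm (y - z) < d1 \<Longrightarrow> norm (g y - g z - H (y - z)) \<le> e' * norm (y - z)"
    using hess unfolding has_derivative_at_alt by blast
  obtain r where r: "r > 0" "ball z r \<subseteq> S" using assms(1,2) open_contains_ball by blast
  have "\<bar>f (z + s *\<^sub>R h + s *\<^sub>R k) - f (z + s *\<^sub>R h) - f (z + s *\<^sub>R k) + f z - s\<^sup>2 * (H h \<bullet> k)\<bar> \<le> e * s\<^sup>2"
    if s: "0 < s" "s < min d1 r / C" for s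
  proof -
    have sC: "s * C < d1" "s * C < r" using s C by (auto simp: pos_less_divide_eq)
    have in_S: "z + v \<in> S" if "norm v \<le> s * C" for v
      using that sC r(2) by (auto simp: dist_norm)
    have "norm (g (z + v) - g z - H v) \<le> e' * (s * C)" if "norm v \<le> s * C" for v
    proof -
      have "norm (g (z + v) - g z - H v) \<le> e' * norm v"
        using d1(2)[of "z + v"] that sC by simp
      also have "\<dots> \<le> e' * (s * C)" using that \<open>e' > 0\<close> by (simp add: mult_left_mono)
      finally show ?thesis .
    qed
    from second_difference_estimate[OF grad has_derivative_linear[OF hess] s(1) C(2) in_S this]
    have "\<bar>f (z + s *\<^sub>R h + s *\<^sub>R k) - f (z + s *\<^sub>R h) - f (z + s *\<^sub>R k) + f z - s\<^sup>2 * (H h \<bullet> k)\<bar>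
        \<le> 2 * (e' * (s * C)) * C * s" .
    also have "\<dots> = e * s\<^sup>2" using C(1) by (simp add: e'_def power2_eq_square)
    finally show ?thesis .
  qed
  moreover have "min d1 r / C > 0" using d1(1) r(1) C(1) by simp
  ultimately show ?thesis by blast
qed

(* Schwarz's theorem under the weak hypothesis that the gradient is differentiable at z only:
   the second difference is symmetric in h and k. *)
lemma hessian_symmetric:
  fixes f :: "'a::real_inner \<Rightarrow> real"
  assumes "open S" "z \<in> S"
    and "\<And>w. w \<in> S \<Longrightarrow> (f has_derivative (\<lambda>u. g w \<bullet> u)) (at w)"
    and "(g has_derivative H) (at z)"
  shows "H h \<bullet> k = H k \<bullet> h"
proof (rule ccontr)
  assume "H h \<bullet> k \<noteq> H k \<bullet> h"
  define e where "e = \<bar>H h \<bullet> k - H k \<bullet> h\<bar> / 4"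
  have "e > 0" using \<open>H h \<bullet> k \<noteq> H k \<bullet> h\<close> by (simp add: e_def)
  obtain \<delta>1 \<delta>2 where "\<delta>1 > 0" "\<delta>2 > 0" and
    hk: "\<And>s. 0 < s \<and> s < \<delta>1 \<Longrightarrow>
      \<bar>f (z + s *\<^sub>R h + s *\<^sub>R k) - f (z + s *\<^sub>R h) - f (z + s *\<^sub>R k) + f z - s\<^sup>2 * (H h \<bullet> k)\<bar> \<le> e * s\<^sup>2" and
    kh: "\<And>s. 0 < s \<and> s < \<delta>2 \<Longrightarrow>
      \<bar>f (z + s *\<^sub>R k + s *\<^sub>R h) - f (z + s *\<^sub>R k) - f (z + s *\<^sub>R h) + f z - s\<^sup>2 * (H k \<bullet> h)\<bar> \<le> e * s\<^sup>2"
    using second_difference_asymptotics[OF assms \<open>e > 0\<close>] by metis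
  define s where "s = min \<delta>1 \<delta>2 / 2"
  have s: "0 < s" "s < \<delta>1" "s < \<delta>2" using \<open>\<delta>1 > 0\<close> \<open>\<delta>2 > 0\<close> by (auto simp: s_def)
  have swap: "z + s *\<^sub>R k + s *\<^sub>R h = z + s *\<^sub>R h + s *\<^sub>R k" by (simp add: algebra_simps)
  have "\<bar>f (z + s *\<^sub>R h + s *\<^sub>R k) - f (z + s *\<^sub>R h) - f (z + s *\<^sub>R k) + f z - s\<^sup>2 * (H k \<bullet> h)\<bar> \<le> e * s\<^sup>2"
    using kh[of s] s unfolding swap by (simp add: algebra_simps)
  with hk[of s] s have "\<bar>s\<^sup>2 * (H h \<bullet> k) - s\<^sup>2 * (H k \<bullet> h)\<bar> \<le> 2 * e * s\<^sup>2"
    by linarith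
  then have "s\<^sup>2 * (4 * e) \<le> s\<^sup>2 * (2 * e)"
    by (simp add: e_def abs_mult flip: right_diff_distrib)
  then show False using s \<open>e > 0\<close> by simp
qed

section \<open>Lipschitz gradients from Hessian bounds\<close>

lemma symmetric_form_polarization_bound:
  fixes A :: "'a::real_inner \<Rightarrow> 'a"
  assumes "linear A" "\<And>u v. A u \<bullet> v = A v \<bullet> u" "\<And>u. \<bar>A u \<bullet> u\<bar> \<le> D * (norm u)\<^sup>2"
  shows "2 * (A h \<bullet> k) \<le> D * ((norm h)\<^sup>2 + (norm k)\<^sup>2)"
proof -
  have "4 * (A h \<bullet> k) = A (h + k) \<bullet> (h + k) - A (h - k) \<bullet> (h - k)"
    using assms(2)[of k h]
    by (simp add: linear_add[OF assms(1)] linear_diff[OF assms(1)] inner_add_left inner_add_right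
        inner_diff_left inner_diff_right)
  also have "\<dots> \<le> D * (norm (h + k))\<^sup>2 + D * (norm (h - k))\<^sup>2"
    using assms(3)[of "h + k"] assms(3)[of "h - k"] by linarith
  also have "\<dots> = 2 * D * ((norm h)\<^sup>2 + (norm k)\<^sup>2)"
    by (simp add: power2_norm_eq_inner inner_add_left inner_add_right inner_diff_left
        inner_diff_right inner_commute algebra_simps)
  finally show ?thesis by simp
qed

lemma symmetric_operator_norm_bound:
  fixes A :: "'a::real_inner \<Rightarrow> 'a"
  assumes "linear A" "\<And>u v. A u \<bullet> v = A v \<bullet> u"
    and "\<And>u. lo * (norm u)\<^sup>2 \<le> A u \<bullet> u \<and> A u \<bullet> u \<le> hi * (norm u)\<^sup>2"
  shows "norm (A h) \<le> max \<bar>lo\<bar> \<bar>hi\<bar> * norm h"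
proof (cases "A h = 0")
  case False
  define D where "D = max \<bar>lo\<bar> \<bar>hi\<bar>"
  have "\<bar>A u \<bullet> u\<bar> \<le> D * (norm u)\<^sup>2" for u
  proof -
    have "- D \<le> lo" "hi \<le> D" unfolding D_def by auto
    then have "- D * (norm u)\<^sup>2 \<le> lo * (norm u)\<^sup>2" "hi * (norm u)\<^sup>2 \<le> D * (norm u)\<^sup>2"
      using mult_right_mono[of "- D" lo "(norm u)\<^sup>2"] mult_right_mono[of hi D "(norm u)\<^sup>2"] by auto
    then show ?thesis using assms(3)[of u] by linarith
  qed
  from symmetric_form_polarization_bound[OF assms(1,2) this]
  have "2 * (A h \<bullet> ((norm h / norm (A h)) *\<^sub>R A h))
      \<le> D * ((norm h)\<^sup>2 + (norm ((norm h / norm (A h)) *\<^sub>R A h))\<^sup>2)" .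
  then have "norm h * norm (A h) \<le> norm h * (D * norm h)"
    using False by (simp add: power2_norm_eq_inner[symmetric] power2_eq_square algebra_simps)
  moreover have "h \<noteq> 0" using False linear_0[OF assms(1)] by auto
  ultimately show ?thesis by (simp add: D_def)
qed simp

lemma gradient_lipschitz_of_hessian_bounds:
  fixes \<phi> :: "'a::real_inner \<Rightarrow> real"
  assumes "open S" "convex K" "K \<subseteq> S"
    and grad: "\<And>w. w \<in> S \<Longrightarrow> (\<phi> has_derivative (\<lambda>u. g w \<bullet> u)) (at w)"
    and hess: "\<And>w. w \<in> S \<Longrightarrow> (g has_derivative H w) (at w)"
    and bounds: "\<And>z u. z \<in> K \<Longrightarrow> lo * (norm u)\<^sup>2 \<le> H z u \<bullet> u \<and> H z u \<bullet> u \<le> hi * (norm u)\<^sup>2"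
    and "a \<in> K" "b \<in> K"
  shows "norm (g a - g b) \<le> max \<bar>lo\<bar> \<bar>hi\<bar> * norm (a - b)"
proof (rule differentiable_bound[OF assms(2) _ _ assms(7,8)])
  fix z assume "z \<in> K"
  then have "z \<in> S" using assms(3) by blast
  show "(g has_derivative H z) (at z within K)"
    using hess[OF \<open>z \<in> S\<close>] by (rule has_derivative_at_withinI)
  show "onorm (H z) \<le> max \<bar>lo\<bar> \<bar>hi\<bar>"
  proof (rule onorm_bound)
    fix u
    show "norm (H z u) \<le> max \<bar>lo\<bar> \<bar>hi\<bar> * norm u"
      by (rule symmetric_operator_norm_bound[OF has_derivative_linear[OF hess[OF \<open>z \<in> S\<close>]]
            hessian_symmetric[OF assms(1) \<open>z \<in> S\<close> grad hess[OF \<open>z \<in> S\<close>]] bounds[OF \<open>z \<in> K\<close>]])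
  qed simp
qed

lemma convex_hessian_upper_bound_nonneg:
  fixes f :: "'a::euclidean_space \<Rightarrow> real"
  assumes "open S" "convex_on S f" "z \<in> S"
    and "\<And>w. w \<in> S \<Longrightarrow> (f has_derivative (\<lambda>h. g w \<bullet> h)) (at w)"
    and "(g has_derivative H) (at z)"
    and upper: "\<And>h. H h \<bullet> h \<le> L * (norm h)\<^sup>2"
  shows "0 \<le> L"
proof -
  obtain b :: 'a where "b \<in> Basis" using nonempty_Basis by blast
  have "0 \<le> H b \<bullet> b" by (rule convex_on_hessian_nonneg[OF assms(1-5)])
  also have "\<dots> \<le> L" using upper[of b] \<open>b \<in> Basis\<close> by simp
  finally show ?thesis .
qed

lemma convex_gradient_lipschitz:
  fixes f :: "'a::euclidean_space \<Rightarrow> real"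
  assumes "open S" "convex K" "K \<subseteq> S" "convex_on S f"
    and grad: "\<And>w. w \<in> S \<Longrightarrow> (f has_derivative (\<lambda>h. g w \<bullet> h)) (at w)"
    and hess: "\<And>w. w \<in> S \<Longrightarrow> (g has_derivative H w) (at w)"
    and upper: "\<And>z h. z \<in> K \<Longrightarrow> H z h \<bullet> h \<le> L * (norm h)\<^sup>2"
    and "a \<in> K" "b \<in> K"
  shows "norm (g a - g b) \<le> L * norm (a - b)"
proof -
  have "0 * (norm h)\<^sup>2 \<le> H z h \<bullet> h \<and> H z h \<bullet> h \<le> L * (norm h)\<^sup>2" if "z \<in> K" for z h
    using convex_on_hessian_nonneg[OF assms(1,4) _ grad hess] upper[OF that] that assms(3) by auto
  from gradient_lipschitz_of_hessian_bounds[OF assms(1-3) grad hess this assms(8,9)]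
  have "norm (g a - g b) \<le> \<bar>L\<bar> * norm (a - b)" by simp
  moreover have "0 \<le> L"
    using convex_hessian_upper_bound_nonneg[OF assms(1,4) _ grad hess upper] assms(3,8) by blast
  ultimately show ?thesis by simp
qed

section \<open>Quadratic growth and best responses\<close>

lemma quadratic_lower_bound_of_hessian:
  fixes F :: "'a::real_inner \<Rightarrow> real"
  assumes "convex K" "a \<in> K" "z \<in> K"
    and grad: "\<And>w. w \<in> K \<Longrightarrow> (F has_derivative (\<lambda>u. g w \<bullet> u)) (at w)"
    and hess: "\<And>w. w \<in> K \<Longrightarrow> (g has_derivative H w) (at w)"
    and lower: "\<And>w u. w \<in> K \<Longrightarrow> \<mu> * (norm u)\<^sup>2 \<le> H w u \<bullet> u"
  shows "F a + g a \<bullet> (z - a) + \<mu> / 2 * (norm (z - a))\<^sup>2 \<le> F z"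
proof -
  define v where "v = z - a"
  have in_K: "a + t *\<^sub>R v \<in> K" if "0 \<le> t" "t \<le> 1" for t
    unfolding v_def using convex_segment_mem[OF assms(1-3) that] .
  define \<psi> where "\<psi> t = g (a + t *\<^sub>R v) \<bullet> v - \<mu> * t * (norm v)\<^sup>2" for t
  have \<psi>_mono: "\<psi> 0 \<le> \<psi> t" if "0 \<le> t" "t \<le> 1" for t
  proof (rule DERIV_nonneg_imp_nondecreasing[OF \<open>0 \<le> t\<close>])
    fix s assume s: "0 \<le> s" "s \<le> t"
    then have "a + s *\<^sub>R v \<in> K" using that in_K by simp
    have "((\<lambda>s. g (a + s *\<^sub>R v) \<bullet> v) has_real_derivative H (a + s *\<^sub>R v) v \<bullet> v) (at s)"
      using has_real_derivative_along_line[of "\<lambda>u. g u \<bullet> v" "\<lambda>u. H (a + s *\<^sub>R v) u \<bullet> v" a s v]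
        has_derivative_inner_left[OF hess[OF \<open>a + s *\<^sub>R v \<in> K\<close>], of v] by simp
    then have "(\<psi> has_real_derivative H (a + s *\<^sub>R v) v \<bullet> v - \<mu> * (norm v)\<^sup>2) (at s)"
      unfolding \<psi>_def by (auto intro!: derivative_eq_intros)
    moreover have "0 \<le> H (a + s *\<^sub>R v) v \<bullet> v - \<mu> * (norm v)\<^sup>2"
      using lower[OF \<open>a + s *\<^sub>R v \<in> K\<close>] by simp
    ultimately show "\<exists>y. (\<psi> has_real_derivative y) (at s) \<and> 0 \<le> y" by blast
  qed
  define \<phi> where "\<phi> t = F (a + t *\<^sub>R v) - t * (g a \<bullet> v) - \<mu> / 2 * t\<^sup>2 * (norm v)\<^sup>2" for t
  have "\<phi> 0 \<le> \<phi> 1"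
  proof (rule DERIV_nonneg_imp_nondecreasing[OF zero_le_one])
    fix t :: real assume t: "0 \<le> t" "t \<le> 1"
    have "((\<lambda>t. F (a + t *\<^sub>R v)) has_real_derivative g (a + t *\<^sub>R v) \<bullet> v) (at t)"
      using has_real_derivative_along_line grad[OF in_K[OF t]] by blast
    then have "(\<phi> has_real_derivative g (a + t *\<^sub>R v) \<bullet> v - g a \<bullet> v - \<mu> / 2 * (2 * t) * (norm v)\<^sup>2) (at t)"
      unfolding \<phi>_def by (auto intro!: derivative_eq_intros)
    moreover have "g (a + t *\<^sub>R v) \<bullet> v - g a \<bullet> v - \<mu> / 2 * (2 * t) * (norm v)\<^sup>2 = \<psi> t - \<psi> 0"
      by (simp add: \<psi>_def)
    ultimately show "\<exists>y. (\<phi> has_real_derivative y) (at t) \<and> 0 \<le> y"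
      using \<psi>_mono[OF t] by force
  qed
  then show ?thesis by (simp add: \<phi>_def v_def)
qed

lemma quadratic_growth_at_minimizer:
  fixes F G :: "'a::real_inner \<Rightarrow> real"
  assumes G: "convex_on K G" and "xs \<in> K" "z \<in> K"
    and grad: "\<And>w. w \<in> K \<Longrightarrow> (F has_derivative (\<lambda>u. g w \<bullet> u)) (at w)"
    and hess: "\<And>w. w \<in> K \<Longrightarrow> (g has_derivative H w) (at w)"
    and lower: "\<And>w u. w \<in> K \<Longrightarrow> \<mu> * (norm u)\<^sup>2 \<le> H w u \<bullet> u"
    and min: "\<And>w. w \<in> K \<Longrightarrow> F xs + G xs \<le> F w + G w"
  shows "\<mu> / 2 * (norm (z - xs))\<^sup>2 \<le> (F z + G z) - (F xs + G xs)"
  using quadratic_lower_bound_of_hessian[OF convex_on_imp_convex[OF G] assms(2,3) grad hess lower]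
    minimizer_variational_inequality[OF G assms(2,3) grad[OF assms(2)] min]
  by simp

lemma distance_bound_of_strong_monotonicity:
  fixes P Q :: "'a::real_inner \<Rightarrow> 'a"
  assumes opt: "(P a + e - Q b) \<bullet> (a - b) \<le> 0"
    and strong: "c * (norm (a - b))\<^sup>2 \<le> (P a - P b) \<bullet> (a - b)" and "c > 0"
    and lip: "norm ((P b - Q b) - (P w - Q w)) \<le> D * norm (b - w)"
  shows "norm (a - w) \<le> (D / c + 1) * norm (w - b) + norm (P w + e - Q w) / c"
proof -
  have "c * (norm (a - b))\<^sup>2 \<le> - ((P b + e - Q b) \<bullet> (a - b))"
    using opt strong by (simp add: inner_diff_left inner_add_left)
  also have "\<dots> \<le> norm (P b + e - Q b) * norm (a - b)"
    using Cauchy_Schwarz_ineq2[of "P b + e - Q b" "a - b"] by linarith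
  finally have "c * norm (a - b) \<le> norm (P b + e - Q b)"
    by (cases "a = b") (auto simp: power2_eq_square)
  also have "\<dots> \<le> D * norm (w - b) + norm (P w + e - Q w)"
    using norm_triangle_ineq[of "(P b - Q b) - (P w - Q w)" "P w + e - Q w"] lip
    by (simp add: algebra_simps norm_minus_commute)
  moreover have "c * norm (a - w) \<le> c * norm (a - b) + c * norm (w - b)"
    using norm_triangle_ineq4[of "a - b" "w - b"] \<open>c > 0\<close>
    by (simp flip: distrib_left add: mult_left_mono)
  ultimately have "c * norm (a - w) \<le> c * ((D / c + 1) * norm (w - b) + norm (P w + e - Q w) / c)"
    using \<open>c > 0\<close> by (simp add: algebra_simps)
  then show ?thesis using \<open>c > 0\<close> by simp
qed

lemma best_response_distance_bound:
  fixes q F G :: "'a::real_inner \<Rightarrow> real" and P Q :: "'a \<Rightarrow> 'a"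
  assumes G: "convex_on K G" and "a \<in> K" "b \<in> K"
    and q_grad: "\<And>u. u \<in> K \<Longrightarrow> (q has_derivative (\<lambda>h. P u \<bullet> h)) (at u)"
    and q_strong: "strongly_convex_with K c q" and "0 < c0" "c0 \<le> c"
    and a_min: "\<And>z. z \<in> K \<Longrightarrow> q a + v \<bullet> (a - w) + G a \<le> q z + v \<bullet> (z - w) + G z"
    and F_grad: "(F has_derivative (\<lambda>h. Q b \<bullet> h)) (at b)"
    and b_min: "\<And>z. z \<in> K \<Longrightarrow> F b + G b \<le> F z + G z"
    and lip: "norm ((P b - Q b) - (P w - Q w)) \<le> D * norm (b - w)"
  shows "norm (a - w) \<le> (D / c0 + 1) * norm (w - b) + norm (P w + v - Q w) / c0"
proof (rule distance_bound_of_strong_monotonicity[OF _ _ \<open>0 < c0\<close> lip])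
  have "((\<lambda>u. q u + v \<bullet> (u - w)) has_derivative (\<lambda>h. (P a + v) \<bullet> h)) (at a)"
    using q_grad[OF \<open>a \<in> K\<close>] by (auto simp: inner_add_left intro!: derivative_eq_intros)
  from gradient_inner_nonpos_of_minimizers[OF G \<open>a \<in> K\<close> \<open>b \<in> K\<close> this _ F_grad b_min] a_min
  show "(P a + v - Q b) \<bullet> (a - b) \<le> 0" by simp
  have "c * (norm (a - b))\<^sup>2 \<le> (P a - P b) \<bullet> (a - b)"
    by (rule strongly_convex_gradient_strongly_monotone[OF q_strong \<open>a \<in> K\<close> \<open>b \<in> K\<close>
          q_grad[OF \<open>a \<in> K\<close>] q_grad[OF \<open>b \<in> K\<close>]])
  then show "c0 * (norm (a - b))\<^sup>2 \<le> (P a - P b) \<bullet> (a - b)"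
    using mult_right_mono[OF \<open>c0 \<le> c\<close>, of "(norm (a - b))\<^sup>2"] by simp
qed

section \<open>SONATA iterates\<close>

lemma sonata_iterates_in:
  fixes x xhat :: "nat \<Rightarrow> nat \<Rightarrow> 'a::real_vector"
  assumes "convex K" "0 \<le> \<alpha>" "\<alpha> \<le> 1"
    and W_nonneg: "\<And>i j. i < m \<Longrightarrow> j < m \<Longrightarrow> 0 \<le> W i j"
    and W_row: "\<And>i. i < m \<Longrightarrow> (\<Sum>j<m. W i j) = 1"
    and x0: "\<And>i. i < m \<Longrightarrow> x 0 i \<in> K"
    and xhat: "\<And>k i. i < m \<Longrightarrow> xhat k i \<in> K"
    and step: "\<And>k i. i < m \<Longrightarrow> x (Suc k) i = (\<Sum>j<m. W i j *\<^sub>R (x k j + \<alpha> *\<^sub>R (xhat k j - x k j)))"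
  shows "i < m \<Longrightarrow> x k i \<in> K"
proof (induction k arbitrary: i)
  case (Suc k)
  have "x k j + \<alpha> *\<^sub>R (xhat k j - x k j) \<in> K" if "j < m" for j
  proof -
    have "x k j + \<alpha> *\<^sub>R (xhat k j - x k j) = (1 - \<alpha>) *\<^sub>R x k j + \<alpha> *\<^sub>R xhat k j"
      by (simp add: algebra_simps)
    then show ?thesis
      using convexD[OF assms(1) Suc.IH[OF that] xhat[OF that]] assms(2,3) by simp
  qed
  then show ?case
    unfolding step[OF Suc.prems]
    by (intro convex_sum[OF _ assms(1)]) (auto simp: W_row[OF Suc.prems] W_nonneg[OF Suc.prems])
qed (use x0 in simp)

lemma gradient_tracking_sum:
  fixes y g :: "nat \<Rightarrow> nat \<Rightarrow> 'a::real_vector"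
  assumes W_col: "\<And>j. j < m \<Longrightarrow> (\<Sum>i<m. W i j) = 1"
    and y0: "\<And>i. i < m \<Longrightarrow> y 0 i = g 0 i"
    and step: "\<And>k i. i < m \<Longrightarrow> y (Suc k) i = (\<Sum>j<m. W i j *\<^sub>R (y k j + g (Suc k) j - g k j))"
  shows "(\<Sum>i<m. y k i) = (\<Sum>i<m. g k i)"
proof (induction k)
  case (Suc k)
  have "(\<Sum>i<m. y (Suc k) i) = (\<Sum>i<m. \<Sum>j<m. W i j *\<^sub>R (y k j + g (Suc k) j - g k j))"
    by (simp add: step)
  also have "\<dots> = (\<Sum>j<m. (\<Sum>i<m. W i j) *\<^sub>R (y k j + g (Suc k) j - g k j))"
    by (subst sum.swap) (simp add: scaleR_sum_left)
  also have "\<dots> = (\<Sum>i<m. g (Suc k) i)"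
    using Suc.IH by (simp add: W_col sum.distrib sum_subtractf)
  finally show ?case .
qed (simp add: y0)

lemma norm_average_difference_le:
  fixes g :: "nat \<Rightarrow> 'a::real_normed_vector \<Rightarrow> 'b::real_normed_vector"
  assumes lip: "\<And>j u v. j < m \<Longrightarrow> u \<in> K \<Longrightarrow> v \<in> K \<Longrightarrow> norm (g j u - g j v) \<le> L * norm (u - v)"
    and "0 \<le> L" and x: "\<And>i. i < m \<Longrightarrow> x i \<in> K" and "i < m"
  shows "norm ((1 / real m) *\<^sub>R (\<Sum>j<m. g j (x j) - g j (x i)))
    \<le> L * ((1 / real m) * (\<Sum>j<m. norm (x j - c)) + norm (x i - c))"
proof -
  have "norm (\<Sum>j<m. g j (x j) - g j (x i)) \<le> (\<Sum>j<m. L * (norm (x j - c) + norm (x i - c)))"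
  proof (intro sum_norm_le)
    fix j assume "j \<in> {..<m}"
    have "norm (x j - x i) \<le> norm (x j - c) + norm (x i - c)"
      using norm_triangle_ineq4[of "x j - c" "x i - c"] by simp
    then have "L * norm (x j - x i) \<le> L * (norm (x j - c) + norm (x i - c))"
      using \<open>0 \<le> L\<close> by (rule mult_left_mono)
    then show "norm (g j (x j) - g j (x i)) \<le> L * (norm (x j - c) + norm (x i - c))"
      using lip[of j "x j" "x i"] x \<open>j \<in> {..<m}\<close> \<open>i < m\<close> by simp
  qed
  then have "norm ((1 / real m) *\<^sub>R (\<Sum>j<m. g j (x j) - g j (x i)))
      \<le> (1 / real m) * (\<Sum>j<m. L * (norm (x j - c) + norm (x i - c)))"
    by (simp add: divide_right_mono)
  also have "\<dots> = L * ((1 / real m) * (\<Sum>j<m. norm (x j - c)) + norm (x i - c))"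
    using \<open>i < m\<close> by (simp add: sum.distrib sum_distrib_left[symmetric] field_simps)
  finally show ?thesis .
qed

lemma average_gradient_deviation_bound:
  fixes g :: "nat \<Rightarrow> 'a::real_normed_vector \<Rightarrow> 'b::real_normed_vector"
  assumes lip: "\<And>j u v. j < m \<Longrightarrow> u \<in> K \<Longrightarrow> v \<in> K \<Longrightarrow> norm (g j u - g j v) \<le> L * norm (u - v)"
    and "0 \<le> L" and x: "\<And>i. i < m \<Longrightarrow> x i \<in> K"
  shows "(\<Sum>i<m. (norm ((1 / real m) *\<^sub>R (\<Sum>j<m. g j (x j) - g j (x i))))\<^sup>2)
    \<le> 4 * L\<^sup>2 * (\<Sum>i<m. (norm (x i - c))\<^sup>2)"
proof -
  define r where "r i = norm (x i - c)" for i
  define R where "R = (1 / real m) * (\<Sum>j<m. r j)"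
  have "real m * R\<^sup>2 \<le> (\<Sum>j<m. (r j)\<^sup>2)"
    using sum_squared_le_sum_of_squares[of r "{..<m}"]
    by (cases "m = 0") (auto simp: R_def power2_eq_square field_simps)
  have "(\<Sum>i<m. (norm ((1 / real m) *\<^sub>R (\<Sum>j<m. g j (x j) - g j (x i))))\<^sup>2)
      \<le> (\<Sum>i<m. 2 * L\<^sup>2 * (R\<^sup>2 + (r i)\<^sup>2))"
  proof (rule sum_mono)
    fix i assume "i \<in> {..<m}"
    then have "i < m" by simp
    have "(norm ((1 / real m) *\<^sub>R (\<Sum>j<m. g j (x j) - g j (x i))))\<^sup>2 \<le> L\<^sup>2 * (R + r i)\<^sup>2"
      using norm_average_difference_le[where g = g and x = x and i = i and c = c,
          OF lip \<open>0 \<le> L\<close> x \<open>i < m\<close>]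
      by (simp add: R_def r_def power_mono flip: power_mult_distrib)
    also have "\<dots> \<le> 2 * L\<^sup>2 * (R\<^sup>2 + (r i)\<^sup>2)"
    proof -
      have "(R + r i)\<^sup>2 \<le> 2 * (R\<^sup>2 + (r i)\<^sup>2)"
        using sum_squares_ge_zero[of "R - r i" 0] by (simp add: power2_eq_square algebra_simps)
      from mult_left_mono[OF this zero_le_power2[of L]] show ?thesis by (metis mult.assoc mult.commute)
    qed
    finally show "(norm ((1 / real m) *\<^sub>R (\<Sum>j<m. g j (x j) - g j (x i))))\<^sup>2 \<le> 2 * L\<^sup>2 * (R\<^sup>2 + (r i)\<^sup>2)" .
  qed
  also have "\<dots> = 2 * L\<^sup>2 * (real m * R\<^sup>2 + (\<Sum>i<m. (r i)\<^sup>2))"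
    by (simp add: sum.distrib flip: sum_distrib_left)
  also have "\<dots> \<le> 4 * L\<^sup>2 * (\<Sum>i<m. (r i)\<^sup>2)"
    using mult_left_mono[OF \<open>real m * R\<^sup>2 \<le> (\<Sum>j<m. (r j)\<^sup>2)\<close>, of "2 * L\<^sup>2"]
    by (simp add: algebra_simps)
  finally show ?thesis by (simp add: r_def)
qed

lemma sum_squares_three_term_bound:
  fixes dn r a b :: "nat \<Rightarrow> real"
  assumes "\<And>i. i < m \<Longrightarrow> 0 \<le> dn i" "\<And>i. i < m \<Longrightarrow> dn i \<le> A * r i + B * a i + B * b i"
    and "(\<Sum>i<m. (b i)\<^sup>2) \<le> 4 * L\<^sup>2 * (\<Sum>i<m. (r i)\<^sup>2)"
    and "(\<Sum>i<m. (r i)\<^sup>2) \<le> 2 / \<mu> * P"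
  shows "(\<Sum>i<m. (dn i)\<^sup>2) \<le> 6 / \<mu> * (A\<^sup>2 + 4 * L\<^sup>2 * B\<^sup>2) * P + 3 * B\<^sup>2 * (\<Sum>i<m. (a i)\<^sup>2)"
proof -
  have "(dn i)\<^sup>2 \<le> 3 * (A\<^sup>2 * (r i)\<^sup>2 + B\<^sup>2 * (a i)\<^sup>2 + B\<^sup>2 * (b i)\<^sup>2)" if "i < m" for i
  proof -
    have "(dn i)\<^sup>2 \<le> (A * r i + B * a i + B * b i)\<^sup>2"
      using assms(1,2)[OF that] by (simp add: power_mono)
    also have "\<dots> \<le> 3 * ((A * r i)\<^sup>2 + (B * a i)\<^sup>2 + (B * b i)\<^sup>2)"
      using sum_squares_ge_zero[of "A * r i - B * a i" "B * a i - B * b i"]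
        zero_le_power2[of "A * r i - B * b i"]
      by (simp add: power2_eq_square algebra_simps)
    finally show ?thesis by (simp add: power_mult_distrib)
  qed
  then have "(\<Sum>i<m. (dn i)\<^sup>2) \<le> (\<Sum>i<m. 3 * (A\<^sup>2 * (r i)\<^sup>2 + B\<^sup>2 * (a i)\<^sup>2 + B\<^sup>2 * (b i)\<^sup>2))"
    by (intro sum_mono) simp
  also have "\<dots>
      = 3 * A\<^sup>2 * (\<Sum>i<m. (r i)\<^sup>2) + 3 * B\<^sup>2 * (\<Sum>i<m. (a i)\<^sup>2) + 3 * B\<^sup>2 * (\<Sum>i<m. (b i)\<^sup>2)"
    by (simp add: sum.distrib sum_distrib_left algebra_simps)
  also have "\<dots> \<le> 3 * (A\<^sup>2 + 4 * L\<^sup>2 * B\<^sup>2) * (\<Sum>i<m. (r i)\<^sup>2) + 3 * B\<^sup>2 * (\<Sum>i<m. (a i)\<^sup>2)"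
    using mult_left_mono[OF assms(3), of "3 * B\<^sup>2"] by (simp add: algebra_simps)
  also have "\<dots> \<le> 3 * (A\<^sup>2 + 4 * L\<^sup>2 * B\<^sup>2) * (2 / \<mu> * P) + 3 * B\<^sup>2 * (\<Sum>i<m. (a i)\<^sup>2)"
    using assms(4) by (intro add_right_mono mult_left_mono) auto
  finally show ?thesis by (simp add: algebra_simps)
qed

theorem proposition3p6:
  fixes m :: nat
    and K Oset :: "'a::euclidean_space set"
    and f :: "nat \<Rightarrow> 'a \<Rightarrow> real" and gf :: "nat \<Rightarrow> 'a \<Rightarrow> 'a" and Hf :: "nat \<Rightarrow> 'a \<Rightarrow> 'a \<Rightarrow> 'a"
    and G :: "'a \<Rightarrow> real"
    and \<mu> L :: real and Li :: "nat \<Rightarrow> real"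
    and xstar :: 'a
    and E :: "(nat \<times> nat) set" and W :: "nat \<Rightarrow> nat \<Rightarrow> real"
    and tf :: "nat \<Rightarrow> 'a \<Rightarrow> 'a \<Rightarrow> real" and gtf :: "nat \<Rightarrow> 'a \<Rightarrow> 'a \<Rightarrow> 'a"
    and Htf :: "nat \<Rightarrow> 'a \<Rightarrow> 'a \<Rightarrow> 'a \<Rightarrow> 'a"
    and tL t\<mu> Dl Du :: "nat \<Rightarrow> real"
    and \<alpha> :: real
    and x y xhat :: "nat \<Rightarrow> nat \<Rightarrow> 'a"
    and \<nu> :: nat
  defines "U \<equiv> (\<lambda>z. (1 / real m) * (\<Sum>i<m. f i z) + G z)"
    and "HF \<equiv> (\<lambda>z h. (1 / real m) *\<^sub>R (\<Sum>i<m. Hf i z h))"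
    and "Lmax \<equiv> Max (Li ` {..<m})"
    and "Dmax \<equiv> Max ((\<lambda>i. max \<bar>Dl i\<bar> \<bar>Du i\<bar>) ` {..<m})"
    and "t\<mu>min \<equiv> Min (t\<mu> ` {..<m})"
    and "d \<equiv> (\<lambda>k i. xhat k i - x k i)"
  assumes m_pos: "m \<ge> 1"
    \<comment> \<open>(A)\<close>
    and K_ne: "K \<noteq> {}" and K_closed: "closed K" and K_convex: "convex K"
    and O_open: "open Oset" and K_sub: "K \<subseteq> Oset"
    and f_grad: "\<And>i z. i < m \<Longrightarrow> z \<in> Oset \<Longrightarrow> (f i has_derivative (\<lambda>h. gf i z \<bullet> h)) (at z)"
    and f_hess: "\<And>i z. i < m \<Longrightarrow> z \<in> Oset \<Longrightarrow> (gf i has_derivative Hf i z) (at z)"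
    and f_convex: "\<And>i. i < m \<Longrightarrow> convex_on Oset (f i)"
    and mu_pos: "\<mu> > 0"
    and HF_bounds: "\<And>z h. z \<in> K \<Longrightarrow> \<mu> * (norm h)\<^sup>2 \<le> HF z h \<bullet> h \<and> HF z h \<bullet> h \<le> L * (norm h)\<^sup>2"
    and G_convex: "convex_on K G"
    and xstar_in: "xstar \<in> K"
    and xstar_min: "\<And>z. z \<in> K \<Longrightarrow> U xstar \<le> U z"
    and xstar_unique: "\<And>z. z \<in> K \<Longrightarrow> U z = U xstar \<Longrightarrow> z = xstar"
    and Li_bound: "\<And>i z h. i < m \<Longrightarrow> z \<in> K \<Longrightarrow> Hf i z h \<bullet> h \<le> Li i * (norm h)\<^sup>2"
    \<comment> \<open>(B)\<close>
    and E_sub: "E \<subseteq> {..<m} \<times> {..<m}"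
    and E_sym: "\<And>i j. (i, j) \<in> E \<Longrightarrow> (j, i) \<in> E"
    and E_irrefl: "\<And>i. (i, i) \<notin> E"
    and E_conn: "connected_graph m E"
    \<comment> \<open>(W)\<close>
    and W_diag: "\<And>i. i < m \<Longrightarrow> W i i > 0"
    and W_off: "\<And>i j. i < m \<Longrightarrow> j < m \<Longrightarrow> i \<noteq> j \<Longrightarrow> (W i j > 0 \<longleftrightarrow> (i, j) \<in> E) \<and> ((i, j) \<notin> E \<longrightarrow> W i j = 0)"
    and W_row: "\<And>i. i < m \<Longrightarrow> (\<Sum>j<m. W i j) = 1"
    and W_col: "\<And>j. j < m \<Longrightarrow> (\<Sum>i<m. W i j) = 1"
    \<comment> \<open>(C)\<close>
    and tf_C2: "\<And>i. i < m \<Longrightarrow> C2_on (Oset \<times> Oset) (\<lambda>p. tf i (fst p) (snd p))"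
    and tf_grad: "\<And>i z w. i < m \<Longrightarrow> z \<in> Oset \<Longrightarrow> w \<in> Oset \<Longrightarrow>
                    ((\<lambda>u. tf i u w) has_derivative (\<lambda>h. gtf i z w \<bullet> h)) (at z)"
    and tf_hess: "\<And>i z w. i < m \<Longrightarrow> z \<in> Oset \<Longrightarrow> w \<in> Oset \<Longrightarrow>
                    ((\<lambda>u. gtf i u w) has_derivative Htf i z w) (at z)"
    and tf_consistent: "\<And>i z. i < m \<Longrightarrow> z \<in> Oset \<Longrightarrow> gtf i z z = gf i z"
    and tf_lipschitz: "\<And>i w u v. i < m \<Longrightarrow> w \<in> K \<Longrightarrow> u \<in> K \<Longrightarrow> v \<in> K \<Longrightarrow>
                    norm (gtf i u w - gtf i v w) \<le> tL i * norm (u - v)"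
    and tmu_pos: "\<And>i. i < m \<Longrightarrow> t\<mu> i > 0"
    and tf_strong: "\<And>i w. i < m \<Longrightarrow> w \<in> K \<Longrightarrow> strongly_convex_with K (t\<mu> i) (\<lambda>u. tf i u w)"
    and D_le: "\<And>i. i < m \<Longrightarrow> Dl i \<le> Du i"
    and D_bounds: "\<And>i z w h. i < m \<Longrightarrow> z \<in> K \<Longrightarrow> w \<in> K \<Longrightarrow>
                    Dl i * (norm h)\<^sup>2 \<le> (Htf i z w h - HF z h) \<bullet> h \<and>
                    (Htf i z w h - HF z h) \<bullet> h \<le> Du i * (norm h)\<^sup>2"
    \<comment> \<open>SONATA\<close>
    and alpha: "0 < \<alpha>" "\<alpha> \<le> 1"
    and x0: "\<And>i. i < m \<Longrightarrow> x 0 i \<in> K"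
    and y0: "\<And>i. i < m \<Longrightarrow> y 0 i = gf i (x 0 i)"
    and xhat_in: "\<And>k i. i < m \<Longrightarrow> xhat k i \<in> K"
    and xhat_min: "\<And>k i z. i < m \<Longrightarrow> z \<in> K \<Longrightarrow>
        tf i (xhat k i) (x k i) + (y k i - gf i (x k i)) \<bullet> (xhat k i - x k i) + G (xhat k i)
          \<le> tf i z (x k i) + (y k i - gf i (x k i)) \<bullet> (z - x k i) + G z"
    and x_step: "\<And>k i. i < m \<Longrightarrow> x (Suc k) i = (\<Sum>j<m. W i j *\<^sub>R (x k j + \<alpha> *\<^sub>R d k j))"
    and y_step: "\<And>k i. i < m \<Longrightarrow>
        y (Suc k) i = (\<Sum>j<m. W i j *\<^sub>R (y k j + gf j (x (Suc k) j) - gf j (x k j)))"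
  shows "(\<Sum>i<m. (norm (d \<nu> i))\<^sup>2)
    \<le> 6 / \<mu> * ((Dmax / t\<mu>min + 1)\<^sup>2 + 4 * Lmax\<^sup>2 / t\<mu>min\<^sup>2) * (\<Sum>i<m. U (x \<nu> i) - U xstar)
      + 3 / t\<mu>min\<^sup>2 * (\<Sum>i<m. (norm (y \<nu> i - (1 / real m) *\<^sub>R (\<Sum>j<m. y \<nu> j)))\<^sup>2)"
proof -
  define F where "F = (\<lambda>z. (1 / real m) * (\<Sum>i<m. f i z))"
  define gF where "gF = (\<lambda>z. (1 / real m) *\<^sub>R (\<Sum>i<m. gf i z))"
  define ybar where "ybar = (1 / real m) *\<^sub>R (\<Sum>j<m. y \<nu> j)"
  have dF: "(F has_derivative (\<lambda>h. gF z \<bullet> h)) (at z)" if "z \<in> Oset" for z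
    using f_grad that m_pos unfolding F_def gF_def
    by (auto simp: inner_sum_left intro!: derivative_eq_intros)
  have dgF: "(gF has_derivative HF z) (at z)" if "z \<in> Oset" for z
    using f_hess that unfolding gF_def HF_def by (auto intro!: derivative_eq_intros)
  have W_nonneg: "0 \<le> W i j" if "i < m" "j < m" for i j
    using W_diag W_off that by (metis less_eq_real_def order_refl)
  have xK: "x \<nu> i \<in> K" if "i < m" for i
    using sonata_iterates_in[OF K_convex less_imp_le[OF alpha(1)] alpha(2) W_nonneg W_row x0 xhat_in
        x_step[unfolded d_def] that] .
  have ybar_eq: "ybar = (1 / real m) *\<^sub>R (\<Sum>j<m. gf j (x \<nu> j))"
    using gradient_tracking_sum[of m W y "\<lambda>k i. gf i (x k i)", OF W_col y0 y_step]
    by (simp add: ybar_def)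
  have Li_le: "Li i \<le> Lmax" if "i < m" for i
    unfolding Lmax_def using that by (intro Max_ge) auto
  have Lmax_nonneg: "0 \<le> Lmax"
    using convex_hessian_upper_bound_nonneg[OF O_open f_convex _ f_grad f_hess Li_bound] Li_le
      K_ne K_sub m_pos by fastforce
  have gf_lip: "norm (gf i u - gf i v) \<le> Lmax * norm (u - v)" if "i < m" "u \<in> K" "v \<in> K" for i u v
    using convex_gradient_lipschitz[OF O_open K_convex K_sub f_convex f_grad f_hess Li_bound]
      mult_right_mono[OF Li_le] that by (meson norm_ge_zero order_trans)
  have tracking: "(\<Sum>i<m. (norm (ybar - gF (x \<nu> i)))\<^sup>2) \<le> 4 * Lmax\<^sup>2 * (\<Sum>i<m. (norm (x \<nu> i - xstar))\<^sup>2)"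
    using average_gradient_deviation_bound[OF gf_lip Lmax_nonneg xK, where c = xstar]
    by (simp add: ybar_eq gF_def sum_subtractf scaleR_diff_right)
  have growth: "(\<Sum>i<m. (norm (x \<nu> i - xstar))\<^sup>2) \<le> 2 / \<mu> * (\<Sum>i<m. U (x \<nu> i) - U xstar)"
  proof -
    have "\<mu> / 2 * (norm (x \<nu> i - xstar))\<^sup>2 \<le> U (x \<nu> i) - U xstar" if "i < m" for i
      using quadratic_growth_at_minimizer[OF G_convex xstar_in xK[OF that], of F gF HF \<mu>]
        dF dgF HF_bounds xstar_min K_sub unfolding U_def F_def by (auto simp: subset_iff)
    then show ?thesis
      using mu_pos by (auto simp: sum_distrib_left field_simps intro!: sum_mono)
  qed
  have tmin_pos: "0 < t\<mu>min"
    unfolding t\<mu>min_def using m_pos tmu_pos by (subst Min_gr_iff) (auto simp: lessThan_empty_iff)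
  have tmin_le: "t\<mu>min \<le> t\<mu> i" if "i < m" for i
    unfolding t\<mu>min_def using that by (intro Min_le) auto
  have surrogate_error_lip: "norm ((gtf i u w - gF u) - (gtf i v w - gF v)) \<le> Dmax * norm (u - v)"
    if "i < m" "w \<in> K" "u \<in> K" "v \<in> K" for i w u v
  proof -
    have "w \<in> Oset" using that(2) K_sub by blast
    have "norm ((gtf i u w - gF u) - (gtf i v w - gF v)) \<le> max \<bar>Dl i\<bar> \<bar>Du i\<bar> * norm (u - v)"
    proof (rule gradient_lipschitz_of_hessian_bounds[OF O_open K_convex K_sub, of "\<lambda>u. tf i u w - F u"])
      fix z assume "z \<in> Oset"
      show "((\<lambda>u. tf i u w - F u) has_derivative (\<lambda>h. (gtf i z w - gF z) \<bullet> h)) (at z)"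
        using has_derivative_diff[OF tf_grad[OF that(1) \<open>z \<in> Oset\<close> \<open>w \<in> Oset\<close>] dF[OF \<open>z \<in> Oset\<close>]]
        by (simp add: inner_diff_left)
      show "((\<lambda>u. gtf i u w - gF u) has_derivative (\<lambda>h. Htf i z w h - HF z h)) (at z)"
        using tf_hess[OF that(1) \<open>z \<in> Oset\<close> \<open>w \<in> Oset\<close>] dgF[OF \<open>z \<in> Oset\<close>] by (rule has_derivative_diff)
    qed (use D_bounds that in auto)
    also have "\<dots> \<le> Dmax * norm (u - v)"
      unfolding Dmax_def using that(1) by (intro mult_right_mono Max_ge) auto
    finally show ?thesis .
  qed
  have direction_bound: "norm (d \<nu> i) \<le> (Dmax / t\<mu>min + 1) * norm (x \<nu> i - xstar)
      + 1 / t\<mu>min * norm (y \<nu> i - ybar) + 1 / t\<mu>min * norm (ybar - gF (x \<nu> i))" if "i < m" for i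
  proof -
    have "x \<nu> i \<in> Oset" using xK[OF that] K_sub by blast
    have "norm (xhat \<nu> i - x \<nu> i) \<le> (Dmax / t\<mu>min + 1) * norm (x \<nu> i - xstar)
        + norm (gtf i (x \<nu> i) (x \<nu> i) + (y \<nu> i - gf i (x \<nu> i)) - gF (x \<nu> i)) / t\<mu>min"
      using best_response_distance_bound[OF G_convex xhat_in[OF that] xstar_in _
          tf_strong[OF that xK[OF that]] tmin_pos tmin_le[OF that] xhat_min[OF that] dF _
          surrogate_error_lip[OF that xK[OF that] xstar_in xK[OF that]]]
        tf_grad[OF that _ \<open>x \<nu> i \<in> Oset\<close>] K_sub xstar_in xstar_min unfolding U_def F_def by blast
    also have "gtf i (x \<nu> i) (x \<nu> i) + (y \<nu> i - gf i (x \<nu> i)) - gF (x \<nu> i) = (y \<nu> i - ybar) + (ybar - gF (x \<nu> i))"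
      using tf_consistent[OF that \<open>x \<nu> i \<in> Oset\<close>] by simp
    finally show ?thesis
      using divide_right_mono[OF norm_triangle_ineq[of "y \<nu> i - ybar" "ybar - gF (x \<nu> i)"], of t\<mu>min]
        tmin_pos by (simp add: d_def add_divide_distrib)
  qed
  from sum_squares_three_term_bound[where dn = "\<lambda>i. norm (d \<nu> i)" and r = "\<lambda>i. norm (x \<nu> i - xstar)"
      and a = "\<lambda>i. norm (y \<nu> i - ybar)" and b = "\<lambda>i. norm (ybar - gF (x \<nu> i))", OF _ direction_bound tracking growth]
  show ?thesis by (simp add: ybar_def power_divide)
qed

end
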